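(* Let $\boldsymbol{\mu}_+\ne\boldsymbol{\mu}_-\in\mathbb{R}^d$, $\sigma>0$, and let $(\boldsymbol{X},Y)$ be random with $P(Y=+)=P(Y=-)=1/2$ and $\boldsymbol{X}\mid Y=i\sim N(\boldsymbol{\mu}_i,\sigma^2\boldsymbol{I}_d)$. Let $\boldsymbol{w}\in\mathbb{R}^d\setminus\{\boldsymbol{0}\}$, $b\in\mathbb{R}$, and let the linear classifier assign $\boldsymbol{x}$ to class $+$ iff $\boldsymbol{w}\cdot\boldsymbol{x}+b>0$. Let $\varepsilon>0$, $\delta\ge0$. Put $\boldsymbol{\mu}=\frac12(\boldsymbol{\mu}_+-\boldsymbol{\mu}_-)$, $\bar{\boldsymbol{\mu}}=\frac12(\boldsymbol{\mu}_++\boldsymbol{\mu}_-)$, $b'=\boldsymbol{w}\cdot\bar{\boldsymbol{\mu}}+b$, $\boldsymbol{\mu}_0=\boldsymbol{\mu}/\|\boldsymbol{\mu}\|$, let $\theta\in[0,\pi/2]$ be defined by $\cos\theta=|\boldsymbol{w}\cdot\boldsymbol{\mu}_0|/\|\boldsymbol{w}\|$, let $\beta=\min(\varepsilon\cos\theta,\delta)$ and $$g(\varepsilon,\delta,\theta)=\beta\cos\theta+\sqrt{\varepsilon^2-\beta^2}\,\sin\theta.$$ Let $p_m$ be the probability that $\boldsymbol{X}$ is misclassified and $p_{s-adv}$ the probability that $\boldsymbol{X}$ is correctly classified and has an $(\varepsilon,\delta)$-strong-adversarial example. Then $$p_{s-adv}=1-p_m-\frac12\left[\Phi\!\left(\frac{\boldsymbol{w}\cdot\boldsymbol{\mu}+b'}{\|\boldsymbol{w}\|\sigma}-\frac{g(\varepsilon,\delta,\theta)}{\sigma}\right)+\Phi\!\left(\frac{\boldsymbol{w}\cdot\boldsymbol{\mu}-b'}{\|\boldsymbol{w}\|\sigma}-\frac{g(\varepsilon,\delta,\theta)}{\sigma}\right)\right],$$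 and consequently $$p_{s-adv}+p_m=1-\frac12\left[\Phi\!\left(\frac{\boldsymbol{w}\cdot\boldsymbol{\mu}+b'}{\|\boldsymbol{w}\|\sigma}-\frac{g(\varepsilon,\delta,\theta)}{\sigma}\right)+\Phi\!\left(\frac{\boldsymbol{w}\cdot\boldsymbol{\mu}-b'}{\|\boldsymbol{w}\|\sigma}-\frac{g(\varepsilon,\delta,\theta)}{\sigma}\right)\right].$$
   Context: $\Phi$ is the standard normal CDF, $\|\cdot\|$ the Euclidean norm. An $(\varepsilon,\delta)$-strong-adversarial example of $\boldsymbol{x}$ is a point $\boldsymbol{x}'$ with $\|\boldsymbol{x}-\boldsymbol{x}'\|\le\varepsilon$ and $|(\boldsymbol{x}-\boldsymbol{x}')\cdot\boldsymbol{\mu}_0|\le\delta$ that the classifier assigns to a different class than $\boldsymbol{x}$. The angle $\theta$ is the (acute) angle between $\boldsymbol{w}$ and the line spanned by $\boldsymbol{\mu}_0$. *)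

theory Defs
  imports "HOL-Probability.Probability"
begin

definition Phi :: "real \<Rightarrow> real" where
  "Phi x = measure (density lborel std_normal_density) {..x}"

definition iso_gauss_density :: "'a::euclidean_space \<Rightarrow> real \<Rightarrow> 'a \<Rightarrow> real" where
  "iso_gauss_density m \<sigma> x =
     (2 * pi * \<sigma>\<^sup>2) powr (- real DIM('a) / 2) * exp (- (norm (x - m))\<^sup>2 / (2 * \<sigma>\<^sup>2))"

definition iso_gauss :: "'a::euclidean_space \<Rightarrow> real \<Rightarrow> 'a measure" where
  "iso_gauss m \<sigma> = density lborel (\<lambda>x. ennreal (iso_gauss_density m \<sigma> x))"

text \<open>Linear classifier: True means class +, False means class -.\<close>
definition lin_class :: "'a::euclidean_space \<Rightarrow> real \<Rightarrow> 'a \<Rightarrow> bool" where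
  "lin_class w b x \<longleftrightarrow> w \<bullet> x + b > 0"

definition has_strong_adv :: "'a::euclidean_space \<Rightarrow> real \<Rightarrow> 'a \<Rightarrow> real \<Rightarrow> real \<Rightarrow> 'a \<Rightarrow> bool" where
  "has_strong_adv w b \<mu>0 \<epsilon> \<delta> x \<longleftrightarrow>
     (\<exists>x'. norm (x - x') \<le> \<epsilon> \<and> \<bar>(x - x') \<bullet> \<mu>0\<bar> \<le> \<delta> \<and> lin_class w b x' \<noteq> lin_class w b x)"

definition p_m :: "'a::euclidean_space \<Rightarrow> 'a \<Rightarrow> real \<Rightarrow> 'a \<Rightarrow> real \<Rightarrow> real" where
  "p_m \<mu>p \<mu>n \<sigma> w b =
     1/2 * measure (iso_gauss \<mu>p \<sigma>) {x. \<not> lin_class w b x}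
   + 1/2 * measure (iso_gauss \<mu>n \<sigma>) {x. lin_class w b x}"

definition p_sadv :: "'a::euclidean_space \<Rightarrow> 'a \<Rightarrow> real \<Rightarrow> 'a \<Rightarrow> real \<Rightarrow> real \<Rightarrow> real \<Rightarrow> real" where
  "p_sadv \<mu>p \<mu>n \<sigma> w b \<epsilon> \<delta> =
     (let \<mu> = (1/2) *\<^sub>R (\<mu>p - \<mu>n); \<mu>0 = (1 / norm \<mu>) *\<^sub>R \<mu> in
       1/2 * measure (iso_gauss \<mu>p \<sigma>) {x. lin_class w b x \<and> has_strong_adv w b \<mu>0 \<epsilon> \<delta> x}
     + 1/2 * measure (iso_gauss \<mu>n \<sigma>) {x. \<not> lin_class w b x \<and> has_strong_adv w b \<mu>0 \<epsilon> \<delta> x})"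

end

theory Submission
  imports Defs
begin

(*
  The projection w.X of X ~ N(m, sigma^2 I) is N(w.m, (|w| sigma)^2), so only the signed margin
  w.x + b matters. Let K be the maximum of w.v over the admissible perturbations v
  (|v| <= eps, |v.mu0| <= delta). This set is symmetric, so a correctly classified x has a
  strong adversarial example iff 0 < w.x + b <= K (class +) or -K < w.x + b <= 0 (class -);
  hence p_sadv + p_m = 1/2 P(w.X + b <= K | +) + 1/2 P(w.X + b > -K | -).
  Splitting v into its component s along mu0 and an orthogonal rest gives
  w.v <= a s + c sqrt (eps^2 - s^2) with a = |w| cos theta and c = |w| sin theta; the right-hand
  side increases in s up to s = eps cos theta, so the maximum is attained at s = beta and
  K = |w| g(eps, delta, theta).
*)

section \<open>Products of measures with densities\<close>

lemma density_PiM_prod: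
  fixes f :: "'i \<Rightarrow> 'a \<Rightarrow> ennreal"
  assumes "finite I" and meas: "\<And>i. i \<in> I \<Longrightarrow> f i \<in> borel_measurable (M i)"
    and "\<And>i. sigma_finite_measure (M i)" and "\<And>i. sigma_finite_measure (density (M i) (f i))"
  shows "density (PiM I M) (\<lambda>x. \<Prod>i\<in>I. f i (x i)) = PiM I (\<lambda>i. density (M i) (f i))"
proof -
  interpret product_sigma_finite "\<lambda>i. density (M i) (f i)"
    unfolding product_sigma_finite_def using assms(4) by blast
  interpret M: product_sigma_finite M
    unfolding product_sigma_finite_def using assms(3) by blast
  show ?thesis
  proof (rule PiM_eqI[OF \<open>finite I\<close>])
    show "sets (density (PiM I M) (\<lambda>x. \<Prod>i\<in>I. f i (x i))) = sets (PiM I (\<lambda>i. density (M i) (f i)))"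
      by (auto intro!: sets_PiM_cong)
  next
    fix A assume "\<And>i. i \<in> I \<Longrightarrow> A i \<in> sets (density (M i) (f i))"
    then have A: "\<And>i. i \<in> I \<Longrightarrow> A i \<in> sets (M i)" by simp
    then have PiE_A: "Pi\<^sub>E I A \<in> sets (PiM I M)"
      by (intro sets_PiM_I_finite) (auto simp: \<open>finite I\<close>)
    have prod_meas: "(\<lambda>x. \<Prod>i\<in>I. f i (x i)) \<in> borel_measurable (PiM I M)"
      using meas by (intro borel_measurable_prod_ennreal measurable_compose[OF measurable_component_singleton]) auto
    have prod_indicator: "(\<Prod>i\<in>I. f i (x i)) * indicator (Pi\<^sub>E I A) x = (\<Prod>i\<in>I. f i (x i) * indicator (A i) (x i))"
      if "x \<in> space (PiM I M)" for x
      using that by (auto simp: prod.distrib space_PiM PiE_iff indicator_def \<open>finite I\<close>)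
    have "emeasure (density (PiM I M) (\<lambda>x. \<Prod>i\<in>I. f i (x i))) (Pi\<^sub>E I A)
        = (\<integral>\<^sup>+x. (\<Prod>i\<in>I. f i (x i) * indicator (A i) (x i)) \<partial>PiM I M)"
      using prod_indicator by (simp add: emeasure_density[OF prod_meas PiE_A] cong: nn_integral_cong)
    also have "\<dots> = (\<Prod>i\<in>I. emeasure (density (M i) (f i)) (A i))"
      using A meas by (subst M.product_nn_integral_prod) (auto simp: \<open>finite I\<close> emeasure_density intro!: prod.cong)
    finally show "emeasure (density (PiM I M) (\<lambda>x. \<Prod>i\<in>I. f i (x i))) (Pi\<^sub>E I A)
        = (\<Prod>i\<in>I. emeasure (density (M i) (f i)) (A i))" .
  qed
qed

lemma (in product_prob_space) indep_vars_PiM_components: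
  assumes "finite J" "J \<noteq> {}" "J \<subseteq> I"
  shows "prob_space.indep_vars (PiM I M) M (\<lambda>i \<omega>. \<omega> i) J"
proof (subst P.indep_vars_iff_distr_eq_PiM'[OF \<open>J \<noteq> {}\<close>])
  show "(\<lambda>\<omega>. \<omega> i) \<in> measurable (PiM I M) (M i)" if "i \<in> J" for i
    using that assms by (intro measurable_component_singleton) auto
  have "distr (PiM I M) (PiM J M) (\<lambda>\<omega>. \<lambda>i\<in>J. \<omega> i) = PiM J M"
    using assms by (simp add: distr_PiM_restrict_finite)
  also have "\<dots> = PiM J (\<lambda>i. distr (PiM I M) (M i) (\<lambda>\<omega>. \<omega> i))"
    using assms by (intro PiM_cong) (auto simp: PiM_component)
  finally show "distr (PiM I M) (PiM J M) (\<lambda>\<omega>. \<lambda>i\<in>J. \<omega> i) = PiM J (\<lambda>i. distr (PiM I M) (M i) (\<lambda>\<omega>. \<omega> i))" .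
qed

section \<open>Linear projections of isotropic Gaussians\<close>

lemma iso_gauss_density_sum_Basis:
  fixes m :: "'a::euclidean_space"
  assumes "\<sigma> > 0"
  shows "iso_gauss_density m \<sigma> (\<Sum>b\<in>Basis. f b *\<^sub>R b) = (\<Prod>b\<in>Basis. normal_density (m \<bullet> b) \<sigma> (f b))"
proof -
  have norm_eq: "(norm ((\<Sum>b\<in>Basis. f b *\<^sub>R b) - m))\<^sup>2 = (\<Sum>b\<in>Basis. (f b - m \<bullet> b)\<^sup>2)"
    by (subst power2_norm_eq_inner, subst euclidean_inner)
      (simp add: inner_diff_left inner_sum_left_Basis power2_eq_square)
  have "(2 * pi * \<sigma>\<^sup>2) powr (- real DIM('a) / 2) = ((2 * pi * \<sigma>\<^sup>2) powr (- 1 / 2)) ^ DIM('a)"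
    using assms by (subst powr_power) auto
  also have "\<dots> = (1 / sqrt (2 * pi * \<sigma>\<^sup>2)) ^ DIM('a)"
    using assms by (simp add: powr_minus_divide powr_half_sqrt)
  finally have const_eq: "(2 * pi * \<sigma>\<^sup>2) powr (- real DIM('a) / 2) = (1 / sqrt (2 * pi * \<sigma>\<^sup>2)) ^ DIM('a)" .
  show ?thesis
    unfolding iso_gauss_density_def normal_density_def prod.distrib norm_eq const_eq
    by (simp add: exp_sum[symmetric] sum_divide_distrib[symmetric] sum_negf)
qed

lemma iso_gauss_eq_distr_PiM:
  fixes m :: "'a::euclidean_space"
  assumes "\<sigma> > 0"
  shows "iso_gauss m \<sigma> =
    distr (PiM Basis (\<lambda>b. density lborel (normal_density (m \<bullet> b) \<sigma>))) borel (\<lambda>f. \<Sum>b\<in>Basis. f b *\<^sub>R b)"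
proof -
  let ?e = "\<lambda>f. \<Sum>b\<in>Basis. f b *\<^sub>R b :: 'a"
  have "iso_gauss m \<sigma> = density (distr (PiM Basis (\<lambda>_. lborel)) borel ?e) (\<lambda>x. ennreal (iso_gauss_density m \<sigma> x))"
    unfolding iso_gauss_def lborel_eq[symmetric] ..
  also have "\<dots> = distr (density (PiM Basis (\<lambda>_. lborel)) (\<lambda>f. ennreal (iso_gauss_density m \<sigma> (?e f)))) borel ?e"
    by (rule density_distr) (simp_all add: iso_gauss_density_def)
  also have "(\<lambda>f. ennreal (iso_gauss_density m \<sigma> (?e f))) = (\<lambda>f. \<Prod>b\<in>Basis. ennreal (normal_density (m \<bullet> b) \<sigma> (f b)))"
    using assms by (simp add: iso_gauss_density_sum_Basis prod_ennreal)
  also have "density (PiM Basis (\<lambda>_. lborel)) \<dots> = PiM Basis (\<lambda>b. density lborel (normal_density (m \<bullet> b) \<sigma>))"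
    using assms by (intro density_PiM_prod)
      (auto simp: prob_space_normal_density prob_space_imp_sigma_finite lborel.sigma_finite_measure_axioms)
  finally show ?thesis .
qed

lemma distributed_PiM_normal_lincomb:
  fixes c \<mu> :: "'i \<Rightarrow> real"
  assumes "finite I" "I \<noteq> {}" "I \<subseteq> J" "\<And>i. i \<in> I \<Longrightarrow> c i \<noteq> 0" "\<sigma> > 0"
  shows "distributed (PiM J (\<lambda>i. density lborel (normal_density (\<mu> i) \<sigma>))) lborel (\<lambda>f. \<Sum>i\<in>I. c i * f i)
    (normal_density (\<Sum>i\<in>I. c i * \<mu> i) (sqrt (\<Sum>i\<in>I. (\<bar>c i\<bar> * \<sigma>)\<^sup>2)))"
proof -
  define N where "N = (\<lambda>i. density lborel (normal_density (\<mu> i) \<sigma>))"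
  interpret product_prob_space N J
    using assms(5) prob_space_normal_density prob_space_imp_sigma_finite
    by (auto simp: product_prob_space_def product_prob_space_axioms_def product_sigma_finite_def N_def)
  have "distributed (PiM J N) lborel (\<lambda>f. f i) (normal_density (\<mu> i) \<sigma>)" if "i \<in> J" for i
    using PiM_component[OF that] measurable_component_singleton[OF that, of N]
    by (simp add: distributed_def N_def cong: distr_cong)
  then have normal: "distributed (PiM J N) lborel (\<lambda>f. c i * f i) (normal_density (c i * \<mu> i) (\<bar>c i\<bar> * \<sigma>))"
    if "i \<in> I" for i
    using P.normal_density_affine[of "\<lambda>f. f i" "\<mu> i" \<sigma> "c i" 0] that assms by auto
  have indep: "P.indep_vars (\<lambda>_. borel) (\<lambda>i f. c i * f i) I"
    using P.indep_vars_compose2[OF indep_vars_PiM_components[OF assms(1-3)], of "\<lambda>i x. c i * x"]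
    by (simp add: N_def)
  show ?thesis
    unfolding N_def[symmetric]
    by (rule P.sum_indep_normal[OF assms(1,2) indep _ normal]) (use assms(4,5) in simp_all)
qed

lemma distr_iso_gauss_inner:
  fixes m w :: "'a::euclidean_space"
  assumes "\<sigma> > 0" and "w \<noteq> 0"
  shows "distr (iso_gauss m \<sigma>) lborel (\<lambda>x. w \<bullet> x) = density lborel (normal_density (w \<bullet> m) (norm w * \<sigma>))"
proof -
  define P where "P = PiM Basis (\<lambda>b. density lborel (normal_density (m \<bullet> b) \<sigma>))"
  \<comment> \<open>\<open>sum_indep_normal\<close> needs positive variances, so coordinates orthogonal to \<open>w\<close> are dropped.\<close>
  define I where "I = {b\<in>Basis. w \<bullet> b \<noteq> 0}"
  have "I \<noteq> {}" using assms(2) euclidean_all_zero_iff by (auto simp: I_def)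
  have mean: "(\<Sum>b\<in>I. (w \<bullet> b) * (m \<bullet> b)) = w \<bullet> m"
    unfolding euclidean_inner[of w m] by (rule sum.mono_neutral_left) (auto simp: I_def)
  have "(\<Sum>b\<in>I. (\<bar>w \<bullet> b\<bar> * \<sigma>)\<^sup>2) = (\<Sum>b\<in>Basis. (w \<bullet> b)\<^sup>2) * \<sigma>\<^sup>2"
    by (subst sum.mono_neutral_left[of Basis I]) (auto simp: I_def sum_distrib_right power_mult_distrib)
  also have "\<dots> = (w \<bullet> w) * \<sigma>\<^sup>2"
    by (simp add: euclidean_inner[of w w] power2_eq_square)
  also have "\<dots> = (norm w * \<sigma>)\<^sup>2"
    by (simp add: power2_norm_eq_inner power_mult_distrib)
  finally have sd: "sqrt (\<Sum>b\<in>I. (\<bar>w \<bullet> b\<bar> * \<sigma>)\<^sup>2) = norm w * \<sigma>"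
    using assms(1) by simp
  have proj: "w \<bullet> (\<Sum>b\<in>Basis. f b *\<^sub>R b) = (\<Sum>b\<in>I. (w \<bullet> b) * f b)" for f :: "'a \<Rightarrow> real"
  proof -
    have "w \<bullet> (\<Sum>b\<in>Basis. f b *\<^sub>R b) = (\<Sum>b\<in>Basis. (w \<bullet> b) * f b)"
      by (simp add: inner_sum_right mult.commute)
    also have "\<dots> = (\<Sum>b\<in>I. (w \<bullet> b) * f b)"
      by (rule sum.mono_neutral_right) (auto simp: I_def)
    finally show ?thesis .
  qed
  have "distributed P lborel (\<lambda>f. \<Sum>b\<in>I. (w \<bullet> b) * f b) (normal_density (w \<bullet> m) (norm w * \<sigma>))"
    unfolding P_def mean[symmetric] sd[symmetric] using \<open>I \<noteq> {}\<close> assms(1)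
    by (intro distributed_PiM_normal_lincomb) (auto simp: I_def)
  moreover have "distr (iso_gauss m \<sigma>) lborel (\<lambda>x. w \<bullet> x) = distr P lborel (\<lambda>f. w \<bullet> (\<Sum>b\<in>Basis. f b *\<^sub>R b))"
    unfolding iso_gauss_eq_distr_PiM[OF assms(1)] P_def by (subst distr_distr) (auto simp: comp_def)
  ultimately show ?thesis
    unfolding proj distributed_def by simp
qed

lemma measure_iso_gauss_inner:
  fixes m w :: "'a::euclidean_space"
  assumes "\<sigma> > 0" and "w \<noteq> 0" and "S \<in> sets borel"
  shows "measure (iso_gauss m \<sigma>) {x. w \<bullet> x \<in> S} = measure (density lborel (normal_density (w \<bullet> m) (norm w * \<sigma>))) S"
proof -
  have "measure (density lborel (normal_density (w \<bullet> m) (norm w * \<sigma>))) S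
      = measure (iso_gauss m \<sigma>) ((\<lambda>x. w \<bullet> x) -` S \<inter> space (iso_gauss m \<sigma>))"
    unfolding distr_iso_gauss_inner[OF assms(1,2), symmetric] using assms(3)
    by (intro measure_distr) (simp_all add: iso_gauss_def)
  also have "(\<lambda>x. w \<bullet> x) -` S \<inter> space (iso_gauss m \<sigma>) = {x. w \<bullet> x \<in> S}"
    by (auto simp: iso_gauss_def)
  finally show ?thesis ..
qed

section \<open>The standard normal distribution function\<close>

lemma distr_std_normal_affine:
  assumes "s \<noteq> 0"
  shows "distr (density lborel std_normal_density) lborel (\<lambda>x. \<mu> + s * x) = density lborel (normal_density \<mu> \<bar>s\<bar>)"
proof -
  interpret prob_space "density lborel std_normal_density"
    by (simp add: prob_space_normal_density)
  have "distributed (density lborel std_normal_density) lborel (\<lambda>x. x) std_normal_density"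
    by (simp add: distributed_def distr_id2)
  from normal_density_affine[OF this, of s \<mu>] assms show ?thesis
    by (simp add: distributed_def)
qed

lemma measure_std_normal_lessThan: "measure (density lborel std_normal_density) {..<y} = Phi y"
proof -
  interpret prob_space "density lborel std_normal_density"
    by (simp add: prob_space_normal_density)
  have "AE x in lborel. x \<in> {y} \<longrightarrow> std_normal_density x = 0"
    using AE_lborel_singleton[of y] by eventually_elim auto
  then have "{y} \<in> null_sets (density lborel std_normal_density)"
    by (subst null_sets_density_iff) auto
  then have "measure (density lborel std_normal_density) ({..<y} \<union> {y}) = measure (density lborel std_normal_density) {..<y}"
    by (intro measure_zero_union) (auto simp: measure_def null_sets_def)
  then show ?thesis
    unfolding Phi_def by (simp add: ivl_disj_un_singleton(2)[symmetric])
qed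

lemma Phi_minus: "Phi (- y) = 1 - Phi y"
proof -
  interpret prob_space "density lborel std_normal_density"
    by (simp add: prob_space_normal_density)
  have reflect: "distr (density lborel std_normal_density) lborel uminus = density lborel std_normal_density"
    using distr_std_normal_affine[of "-1" 0] by simp
  have "Phi (- y) = measure (distr (density lborel std_normal_density) lborel uminus) {..-y}"
    unfolding Phi_def reflect ..
  also have "\<dots> = measure (density lborel std_normal_density) (UNIV - {..<y})"
    by (subst measure_distr) (auto intro!: arg_cong[where f = "measure _"])
  also have "\<dots> = 1 - Phi y"
    using prob_compl[of "{..<y}"] measure_std_normal_lessThan by simp
  finally show ?thesis .
qed

lemma measure_normal_atMost:
  assumes "s > 0"
  shows "measure (density lborel (normal_density \<mu> s)) {..t} = Phi ((t - \<mu>) / s)"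
proof -
  have "density lborel (normal_density \<mu> s) = distr (density lborel std_normal_density) lborel (\<lambda>x. \<mu> + s * x)"
    using distr_std_normal_affine[of s \<mu>] assms by simp
  also have "measure \<dots> {..t} = measure (density lborel std_normal_density) {..(t - \<mu>) / s}"
    using assms by (subst measure_distr) (auto simp: field_simps intro!: arg_cong[where f = "measure _"])
  finally show ?thesis unfolding Phi_def .
qed

lemma measure_normal_greaterThan:
  assumes "s > 0"
  shows "measure (density lborel (normal_density \<mu> s)) {t<..} = Phi ((\<mu> - t) / s)"
proof -
  interpret prob_space "density lborel (normal_density \<mu> s)"
    using assms by (rule prob_space_normal_density)
  have "measure (density lborel (normal_density \<mu> s)) {t<..} = 1 - Phi ((t - \<mu>) / s)"
    using prob_compl[of "{..t}"] measure_normal_atMost[OF assms] by (simp add: Compl_eq_Diff_UNIV[symmetric])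
  also have "\<dots> = Phi ((\<mu> - t) / s)"
    using Phi_minus[of "(t - \<mu>) / s"] by (simp add: minus_divide_left)
  finally show ?thesis .
qed

lemma measure_normal_greaterThanAtMost:
  assumes "s > 0" and "t \<le> t'"
  shows "measure (density lborel (normal_density \<mu> s)) {t<..t'} = Phi ((t' - \<mu>) / s) - Phi ((t - \<mu>) / s)"
proof -
  interpret prob_space "density lborel (normal_density \<mu> s)"
    using assms(1) by (rule prob_space_normal_density)
  have "{t<..t'} = {..t'} - {..t}" by auto
  then show ?thesis
    using finite_measure_Diff[of "{..t'}" "{..t}"] assms measure_normal_atMost[OF assms(1)] by simp
qed

section \<open>The largest effect of a strong perturbation\<close>

lemma orthogonal_projection_complement:
  fixes u x :: "'a::real_inner"
  assumes "norm u = 1"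
  shows "(x - (x \<bullet> u) *\<^sub>R u) \<bullet> u = 0"
    and "x \<bullet> (x - (x \<bullet> u) *\<^sub>R u) = (norm (x - (x \<bullet> u) *\<^sub>R u))\<^sup>2"
    and "norm (x - (x \<bullet> u) *\<^sub>R u) = sqrt ((norm x)\<^sup>2 - (x \<bullet> u)\<^sup>2)"
proof -
  have uu: "u \<bullet> u = 1" using assms by (simp add: power2_norm_eq_inner[symmetric])
  show "(x - (x \<bullet> u) *\<^sub>R u) \<bullet> u = 0" by (simp add: inner_diff_left uu)
  show "x \<bullet> (x - (x \<bullet> u) *\<^sub>R u) = (norm (x - (x \<bullet> u) *\<^sub>R u))\<^sup>2"
    unfolding power2_norm_eq_inner by (simp add: inner_diff_left inner_diff_right uu inner_commute)
  have "(norm (x - (x \<bullet> u) *\<^sub>R u))\<^sup>2 = (norm x)\<^sup>2 - (x \<bullet> u)\<^sup>2"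
    unfolding power2_norm_eq_inner using uu
    by (simp add: inner_diff_left inner_diff_right inner_commute power2_eq_square)
  then show "norm (x - (x \<bullet> u) *\<^sub>R u) = sqrt ((norm x)\<^sup>2 - (x \<bullet> u)\<^sup>2)"
    by (metis norm_ge_zero real_sqrt_unique)
qed

lemma inner_le_parallel_plus_orthogonal:
  fixes u v w :: "'a::real_inner"
  assumes "norm u = 1"
  shows "w \<bullet> v \<le> \<bar>w \<bullet> u\<bar> * \<bar>v \<bullet> u\<bar>
    + sqrt ((norm w)\<^sup>2 - (w \<bullet> u)\<^sup>2) * sqrt ((norm v)\<^sup>2 - (v \<bullet> u)\<^sup>2)"
proof -
  define w' where "w' = w - (w \<bullet> u) *\<^sub>R u"
  define v' where "v' = v - (v \<bullet> u) *\<^sub>R u"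
  have uu: "u \<bullet> u = 1" using assms by (simp add: power2_norm_eq_inner[symmetric])
  have orth: "w' \<bullet> u = 0" "u \<bullet> v' = 0"
    using orthogonal_projection_complement(1)[OF assms, of w] orthogonal_projection_complement(1)[OF assms, of v]
    by (simp_all add: w'_def v'_def inner_commute)
  have norms: "norm w' = sqrt ((norm w)\<^sup>2 - (w \<bullet> u)\<^sup>2)" "norm v' = sqrt ((norm v)\<^sup>2 - (v \<bullet> u)\<^sup>2)"
    using orthogonal_projection_complement(3)[OF assms] by (simp_all add: w'_def v'_def)
  have "w \<bullet> v = ((w \<bullet> u) *\<^sub>R u + w') \<bullet> ((v \<bullet> u) *\<^sub>R u + v')"
    by (simp add: w'_def v'_def)
  also have "\<dots> = (w \<bullet> u) * (v \<bullet> u) + w' \<bullet> v'"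
    by (simp add: inner_add_left inner_add_right uu orth)
  also have "\<dots> \<le> \<bar>w \<bullet> u\<bar> * \<bar>v \<bullet> u\<bar> + norm w' * norm v'"
    using norm_cauchy_schwarz[of w' v'] by (simp add: abs_mult[symmetric])
  finally show ?thesis unfolding norms .
qed

lemma abs_inner_le_norm_unit:
  fixes u w :: "'a::real_inner"
  assumes "norm u = 1"
  shows "\<bar>w \<bullet> u\<bar> \<le> norm w"
  using Cauchy_Schwarz_ineq2[of w u] assms by simp

(* s |-> A s + c sqrt (eps^2 - s^2) with c = sqrt (W^2 - A^2) increases up to its maximiser
   s = eps A / W; the proof factors the difference of the square roots through (delta - s). *)
lemma add_sqrt_diff_square_mono:
  fixes A W c \<epsilon> \<delta> s :: real
  assumes s: "0 \<le> s" "s \<le> \<delta>" and below: "\<delta> * W < \<epsilon> * A" and A: "0 \<le> A" "A \<le> W"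
    and c: "0 \<le> c" "c\<^sup>2 = W\<^sup>2 - A\<^sup>2"
  shows "A * s + c * sqrt (\<epsilon>\<^sup>2 - s\<^sup>2) \<le> A * \<delta> + c * sqrt (\<epsilon>\<^sup>2 - \<delta>\<^sup>2)"
proof -
  have "0 \<le> W" "0 \<le> \<delta>" using A s by linarith+
  then have "0 < \<epsilon> * A" using mult_nonneg_nonneg[of \<delta> W] below by linarith
  then have "0 < \<epsilon>" using A(1) by (auto simp: zero_less_mult_iff)
  then have "\<delta> * W < \<epsilon> * W" using below mult_left_mono[OF A(2), of \<epsilon>] by linarith
  with \<open>0 \<le> W\<close> have "\<delta> < \<epsilon>" by (auto simp: mult_less_cancel_right)
  have below_max: "x * c \<le> A * sqrt (\<epsilon>\<^sup>2 - x\<^sup>2)" if x: "0 \<le> x" "x \<le> \<delta>" for x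
  proof -
    have "x\<^sup>2 \<le> \<epsilon>\<^sup>2" using x \<open>\<delta> < \<epsilon>\<close> by (intro power_mono) auto
    have "x * W \<le> \<delta> * W" using x \<open>0 \<le> W\<close> by (intro mult_right_mono)
    then have "(x * W)\<^sup>2 \<le> (\<epsilon> * A)\<^sup>2" using x \<open>0 \<le> W\<close> below by (intro power_mono) auto
    then have "x\<^sup>2 * c\<^sup>2 \<le> A\<^sup>2 * (\<epsilon>\<^sup>2 - x\<^sup>2)"
      unfolding c(2) by (simp add: power_mult_distrib algebra_simps)
    then have "(x * c)\<^sup>2 \<le> (A * sqrt (\<epsilon>\<^sup>2 - x\<^sup>2))\<^sup>2"
      using \<open>x\<^sup>2 \<le> \<epsilon>\<^sup>2\<close> by (simp add: power_mult_distrib)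
    then show ?thesis by (rule power2_le_imp_le) (use A \<open>x\<^sup>2 \<le> \<epsilon>\<^sup>2\<close> in simp)
  qed
  define P where "P = sqrt (\<epsilon>\<^sup>2 - s\<^sup>2)"
  define Q where "Q = sqrt (\<epsilon>\<^sup>2 - \<delta>\<^sup>2)"
  have "s\<^sup>2 \<le> \<epsilon>\<^sup>2" "\<delta>\<^sup>2 \<le> \<epsilon>\<^sup>2" "0 < Q"
    using s \<open>0 \<le> \<delta>\<close> \<open>\<delta> < \<epsilon>\<close> by (auto simp: Q_def intro!: power_mono power_strict_mono)
  have "c * (P - Q) * (P + Q) = (\<delta> - s) * (\<delta> * c + s * c)"
    using \<open>s\<^sup>2 \<le> \<epsilon>\<^sup>2\<close> \<open>\<delta>\<^sup>2 \<le> \<epsilon>\<^sup>2\<close> by (simp add: P_def Q_def power2_eq_square algebra_simps)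
  also have "\<dots> \<le> (\<delta> - s) * (A * Q + A * P)"
    using below_max[of \<delta>] below_max[OF s] s \<open>0 \<le> \<delta>\<close>
    by (intro mult_left_mono add_mono) (auto simp: P_def Q_def)
  finally have "(c * (P - Q)) * (P + Q) \<le> (A * (\<delta> - s)) * (P + Q)"
    by (simp add: algebra_simps)
  moreover have "0 < P + Q" using \<open>0 < Q\<close> \<open>s\<^sup>2 \<le> \<epsilon>\<^sup>2\<close> by (simp add: P_def add_nonneg_pos)
  ultimately have "c * (P - Q) \<le> A * (\<delta> - s)" by (rule mult_right_le_imp_le)
  then show ?thesis unfolding P_def Q_def by (simp add: algebra_simps)
qed

(* The maximum of w.v over |v| <= eps, |v.u| <= delta for a unit vector u;
   with u = mu0 it is the paper's |w| g(eps, delta, theta). *)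
definition strong_adv_margin :: "'a::real_inner \<Rightarrow> 'a \<Rightarrow> real \<Rightarrow> real \<Rightarrow> real" where
  "strong_adv_margin w u \<epsilon> \<delta> =
     (let a = \<bar>w \<bullet> u\<bar>; \<beta> = min (\<epsilon> * a / norm w) \<delta>
      in a * \<beta> + sqrt ((norm w)\<^sup>2 - a\<^sup>2) * sqrt (\<epsilon>\<^sup>2 - \<beta>\<^sup>2))"

lemma strong_adv_margin_unconstrained:
  fixes u w :: "'a::real_inner"
  assumes "norm u = 1" "w \<noteq> 0" "0 \<le> \<epsilon>" "\<epsilon> * \<bar>w \<bullet> u\<bar> / norm w \<le> \<delta>"
  shows "strong_adv_margin w u \<epsilon> \<delta> = \<epsilon> * norm w"
proof -
  define a where "a = \<bar>w \<bullet> u\<bar>"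
  define c where "c = sqrt ((norm w)\<^sup>2 - a\<^sup>2)"
  have "a \<le> norm w" "0 \<le> a" using abs_inner_le_norm_unit[OF assms(1)] by (simp_all add: a_def)
  then have c2: "c\<^sup>2 = (norm w)\<^sup>2 - a\<^sup>2" "0 \<le> c" by (simp_all add: c_def power_mono)
  have "\<epsilon>\<^sup>2 - (\<epsilon> * a / norm w)\<^sup>2 = (\<epsilon> * c / norm w)\<^sup>2"
    using assms(2) by (simp add: c2 power_divide power_mult_distrib field_simps)
  then have "sqrt (\<epsilon>\<^sup>2 - (\<epsilon> * a / norm w)\<^sup>2) = \<epsilon> * c / norm w"
    using assms(3) \<open>0 \<le> c\<close> by simp
  have "strong_adv_margin w u \<epsilon> \<delta> = a * (\<epsilon> * a / norm w) + c * sqrt (\<epsilon>\<^sup>2 - (\<epsilon> * a / norm w)\<^sup>2)"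
    using assms(4) by (simp add: strong_adv_margin_def Let_def a_def c_def)
  also have "\<dots> = \<epsilon> * (a\<^sup>2 + c\<^sup>2) / norm w"
    unfolding \<open>sqrt (\<epsilon>\<^sup>2 - (\<epsilon> * a / norm w)\<^sup>2) = \<epsilon> * c / norm w\<close>
    by (simp add: power2_eq_square add_divide_distrib distrib_left mult.left_commute)
  also have "\<dots> = \<epsilon> * norm w"
    using assms(2) by (simp add: c2(1) power2_eq_square[of "norm w"])
  finally show ?thesis .
qed

lemma strong_adv_margin_constrained:
  assumes "\<not> \<epsilon> * \<bar>w \<bullet> u\<bar> / norm w \<le> \<delta>"
  shows "strong_adv_margin w u \<epsilon> \<delta> = \<bar>w \<bullet> u\<bar> * \<delta> + sqrt ((norm w)\<^sup>2 - (w \<bullet> u)\<^sup>2) * sqrt (\<epsilon>\<^sup>2 - \<delta>\<^sup>2)"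
  using assms by (simp add: strong_adv_margin_def Let_def)

lemma inner_le_strong_adv_margin:
  fixes u v w :: "'a::real_inner"
  assumes "norm u = 1" "w \<noteq> 0" "norm v \<le> \<epsilon>" "\<bar>v \<bullet> u\<bar> \<le> \<delta>"
  shows "w \<bullet> v \<le> strong_adv_margin w u \<epsilon> \<delta>"
proof (cases "\<epsilon> * \<bar>w \<bullet> u\<bar> / norm w \<le> \<delta>")
  case True
  have "w \<bullet> v \<le> norm w * norm v" by (rule norm_cauchy_schwarz)
  also have "\<dots> \<le> \<epsilon> * norm w" using mult_left_mono[OF assms(3) norm_ge_zero[of w]] by (simp add: mult.commute)
  also have "\<dots> = strong_adv_margin w u \<epsilon> \<delta>"
    using strong_adv_margin_unconstrained[OF assms(1,2) _ True] assms(3) norm_ge_zero[of v] by simp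
  finally show ?thesis .
next
  case False
  define a where "a = \<bar>w \<bullet> u\<bar>"
  define s where "s = \<bar>v \<bullet> u\<bar>"
  define c where "c = sqrt ((norm w)\<^sup>2 - a\<^sup>2)"
  have "a \<le> norm w" using abs_inner_le_norm_unit[OF assms(1)] by (simp add: a_def)
  then have "a\<^sup>2 \<le> (norm w)\<^sup>2" by (intro power_mono) (auto simp: a_def)
  have "(norm v)\<^sup>2 \<le> \<epsilon>\<^sup>2" using assms(3) by (simp add: power_mono)
  have "w \<bullet> v \<le> a * s + c * sqrt ((norm v)\<^sup>2 - s\<^sup>2)"
    using inner_le_parallel_plus_orthogonal[OF assms(1), of w v] by (simp add: a_def s_def c_def)
  also have "\<dots> \<le> a * s + c * sqrt (\<epsilon>\<^sup>2 - s\<^sup>2)"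
    using \<open>(norm v)\<^sup>2 \<le> \<epsilon>\<^sup>2\<close> \<open>a\<^sup>2 \<le> (norm w)\<^sup>2\<close>
    by (intro add_left_mono mult_left_mono) (auto simp: c_def)
  also have "\<dots> \<le> a * \<delta> + c * sqrt (\<epsilon>\<^sup>2 - \<delta>\<^sup>2)"
    using False assms(2,4) \<open>a \<le> norm w\<close> \<open>a\<^sup>2 \<le> (norm w)\<^sup>2\<close>
    by (intro add_sqrt_diff_square_mono[where W = "norm w"]) (auto simp: a_def s_def c_def field_simps)
  also have "\<dots> = strong_adv_margin w u \<epsilon> \<delta>"
    using strong_adv_margin_constrained[OF False] by (simp add: a_def c_def)
  finally show ?thesis .
qed

lemma strong_adv_margin_attained:
  fixes u w :: "'a::real_inner"
  assumes "norm u = 1" "w \<noteq> 0" "0 \<le> \<epsilon>" "0 \<le> \<delta>"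
  obtains v where "norm v \<le> \<epsilon>" "\<bar>v \<bullet> u\<bar> \<le> \<delta>" "w \<bullet> v = strong_adv_margin w u \<epsilon> \<delta>"
proof (cases "\<epsilon> * \<bar>w \<bullet> u\<bar> / norm w \<le> \<delta>")
  case True
  let ?v = "(\<epsilon> / norm w) *\<^sub>R w"
  have "norm ?v \<le> \<epsilon>" "\<bar>?v \<bullet> u\<bar> \<le> \<delta>" "w \<bullet> ?v = strong_adv_margin w u \<epsilon> \<delta>"
    using True assms strong_adv_margin_unconstrained[OF assms(1,2,3) True]
    by (simp_all add: abs_mult power2_norm_eq_inner[symmetric] power2_eq_square)
  then show ?thesis by (rule that)
next
  case False
  define a where "a = w \<bullet> u"
  define w' where "w' = w - a *\<^sub>R u"
  define c where "c = norm w'"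
  define Q where "Q = sqrt (\<epsilon>\<^sup>2 - \<delta>\<^sup>2)"
  \<comment> \<open>The full budget \<open>\<delta>\<close> along \<open>u\<close>, the rest along \<open>w'\<close> (if \<open>c = 0\<close>, then \<open>Q / c = 0\<close>).\<close>
  let ?v = "(\<delta> * sgn a) *\<^sub>R u + (Q / c) *\<^sub>R w'"
  have uu: "u \<bullet> u = 1" using assms(1) by (simp add: power2_norm_eq_inner[symmetric])
  have w'u: "w' \<bullet> u = 0" "u \<bullet> w' = 0"
    using orthogonal_projection_complement(1)[OF assms(1), of w] by (simp_all add: w'_def a_def inner_commute)
  have ww': "w \<bullet> w' = c\<^sup>2" and c: "c = sqrt ((norm w)\<^sup>2 - a\<^sup>2)"
    using orthogonal_projection_complement(2,3)[OF assms(1), of w] by (simp_all add: c_def w'_def a_def)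
  have "\<bar>w \<bullet> u\<bar> / norm w \<le> 1" using abs_inner_le_norm_unit[OF assms(1)] assms(2) by simp
  then have "\<delta> \<le> \<epsilon>" using False assms(3) mult_left_le[of "\<bar>w \<bullet> u\<bar> / norm w" \<epsilon>] by auto
  have "(norm ?v)\<^sup>2 = (\<delta> * sgn a)\<^sup>2 + (Q / c)\<^sup>2 * c\<^sup>2"
    unfolding power2_norm_eq_inner c_def by (simp add: inner_add_left inner_add_right uu w'u power2_eq_square)
  also have "\<dots> \<le> \<delta>\<^sup>2 + Q\<^sup>2"
    by (intro add_mono) (auto simp: power_mult_distrib sgn_if power_divide)
  also have "\<dots> = \<epsilon>\<^sup>2" using \<open>\<delta> \<le> \<epsilon>\<close> assms(4) by (simp add: Q_def power_mono)
  finally have "norm ?v \<le> \<epsilon>" using assms(3) by (simp add: power2_le_iff_abs_le)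
  moreover have "\<bar>?v \<bullet> u\<bar> \<le> \<delta>"
    using assms(4) by (simp add: inner_add_left uu w'u abs_mult sgn_if)
  moreover have "w \<bullet> ?v = \<bar>a\<bar> * \<delta> + c * Q"
    using ww' by (simp add: inner_add_right a_def[symmetric] abs_sgn power2_eq_square mult.commute)
  then have "w \<bullet> ?v = strong_adv_margin w u \<epsilon> \<delta>"
    using strong_adv_margin_constrained[OF False] by (simp add: a_def c Q_def)
  ultimately show ?thesis by (rule that)
qed

lemma strong_adv_margin_arccos:
  fixes u w :: "'a::real_inner"
  assumes "norm u = 1" "w \<noteq> 0"
  defines "\<theta> \<equiv> arccos (\<bar>w \<bullet> u\<bar> / norm w)"
  shows "strong_adv_margin w u \<epsilon> \<delta> =
    norm w * (min (\<epsilon> * cos \<theta>) \<delta> * cos \<theta> + sqrt (\<epsilon>\<^sup>2 - (min (\<epsilon> * cos \<theta>) \<delta>)\<^sup>2) * sin \<theta>)"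
proof -
  have "- 1 \<le> \<bar>w \<bullet> u\<bar> / norm w" "\<bar>w \<bullet> u\<bar> / norm w \<le> 1"
    using abs_inner_le_norm_unit[OF assms(1)] assms(2) by (simp_all add: order_trans[of _ 0])
  then have cos: "cos \<theta> = \<bar>w \<bullet> u\<bar> / norm w" and "sin \<theta> = sqrt (1 - (\<bar>w \<bullet> u\<bar> / norm w)\<^sup>2)"
    unfolding \<theta>_def by (rule cos_arccos, rule sin_arccos)
  then have sin: "sin \<theta> = sqrt ((norm w)\<^sup>2 - (w \<bullet> u)\<^sup>2) / norm w"
    using assms(2) by (simp add: power_divide field_simps real_sqrt_divide)
  show ?thesis
    using assms(2) by (simp add: strong_adv_margin_def Let_def cos sin field_simps)
qed

section \<open>Strong adversarial examples of a linear classifier\<close>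

lemma has_strong_adv_iff:
  fixes u w x :: "'a::euclidean_space"
  assumes "norm u = 1" "w \<noteq> 0" "0 \<le> \<epsilon>" "0 \<le> \<delta>"
  shows "has_strong_adv w b u \<epsilon> \<delta> x \<longleftrightarrow>
    (if lin_class w b x then w \<bullet> x + b \<le> strong_adv_margin w u \<epsilon> \<delta>
     else - strong_adv_margin w u \<epsilon> \<delta> < w \<bullet> x + b)"
proof -
  let ?K = "strong_adv_margin w u \<epsilon> \<delta>"
  let ?feasible = "\<lambda>v. norm v \<le> \<epsilon> \<and> \<bar>v \<bullet> u\<bar> \<le> \<delta>"
  obtain v0 where v0: "?feasible v0" "w \<bullet> v0 = ?K"
    using strong_adv_margin_attained[OF assms] by blast
  have "?feasible (- v0)" using v0(1) by simp
  have bound: "w \<bullet> v \<le> ?K" "- ?K \<le> w \<bullet> v" if "?feasible v" for v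
    using that inner_le_strong_adv_margin[OF assms(1,2), where v = v and \<epsilon> = \<epsilon> and \<delta> = \<delta>]
      inner_le_strong_adv_margin[OF assms(1,2), where v = "- v" and \<epsilon> = \<epsilon> and \<delta> = \<delta>]
    by auto
  have flip: "lin_class w b (x - v) \<noteq> lin_class w b x \<longleftrightarrow>
      (if lin_class w b x then w \<bullet> x + b \<le> w \<bullet> v else w \<bullet> v < w \<bullet> x + b)" for v
    by (auto simp: lin_class_def inner_diff_right)
  have reindex: "(\<exists>x'. P x') \<longleftrightarrow> (\<exists>v. P (x - v))" for P :: "'a \<Rightarrow> bool"
  proof
    assume "\<exists>x'. P x'"
    then obtain x' where "P x'" ..
    then show "\<exists>v. P (x - v)" by (intro exI[of _ "x - x'"]) simp
  qed blast
  have "has_strong_adv w b u \<epsilon> \<delta> x \<longleftrightarrow> (\<exists>v. ?feasible v \<and> lin_class w b (x - v) \<noteq> lin_class w b x)"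
    unfolding has_strong_adv_def by (subst reindex) simp
  also have "\<dots> \<longleftrightarrow> (if lin_class w b x then w \<bullet> x + b \<le> ?K else - ?K < w \<bullet> x + b)"
    unfolding flip using v0 \<open>?feasible (- v0)\<close> bound
    by (cases "lin_class w b x") (fastforce, fastforce intro!: exI[of _ "- v0"])
  finally show ?thesis .
qed

lemma p_m_eq_Phi:
  fixes \<mu>p \<mu>n w :: "'a::euclidean_space"
  assumes "\<sigma> > 0" "w \<noteq> 0"
  shows "p_m \<mu>p \<mu>n \<sigma> w b
    = 1/2 * Phi ((- b - w \<bullet> \<mu>p) / (norm w * \<sigma>)) + 1/2 * Phi ((w \<bullet> \<mu>n + b) / (norm w * \<sigma>))"
proof -
  have "{x. \<not> lin_class w b x} = {x. w \<bullet> x \<in> {..-b}}" "{x. lin_class w b x} = {x. w \<bullet> x \<in> {-b<..}}"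
    by (auto simp: lin_class_def)
  then have "p_m \<mu>p \<mu>n \<sigma> w b = 1/2 * measure (density lborel (normal_density (w \<bullet> \<mu>p) (norm w * \<sigma>))) {..-b}
      + 1/2 * measure (density lborel (normal_density (w \<bullet> \<mu>n) (norm w * \<sigma>))) {-b<..}"
    unfolding p_m_def by (simp only: measure_iso_gauss_inner[OF assms] atMost_borel greaterThan_borel)
  then show ?thesis
    using assms by (simp add: measure_normal_atMost measure_normal_greaterThan)
qed

lemma p_sadv_eq_Phi:
  fixes \<mu>p \<mu>n w :: "'a::euclidean_space"
  assumes "\<mu>p \<noteq> \<mu>n" "\<sigma> > 0" "w \<noteq> 0" "0 \<le> \<epsilon>" "0 \<le> \<delta>"
  defines "K \<equiv> strong_adv_margin w ((1 / norm ((1/2) *\<^sub>R (\<mu>p - \<mu>n))) *\<^sub>R ((1/2) *\<^sub>R (\<mu>p - \<mu>n))) \<epsilon> \<delta>"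
  shows "p_sadv \<mu>p \<mu>n \<sigma> w b \<epsilon> \<delta>
    = 1/2 * (Phi ((K - b - w \<bullet> \<mu>p) / (norm w * \<sigma>)) - Phi ((- b - w \<bullet> \<mu>p) / (norm w * \<sigma>)))
    + 1/2 * (Phi ((- b - w \<bullet> \<mu>n) / (norm w * \<sigma>)) - Phi ((- K - b - w \<bullet> \<mu>n) / (norm w * \<sigma>)))"
proof -
  define u where "u = (1 / norm ((1/2) *\<^sub>R (\<mu>p - \<mu>n))) *\<^sub>R ((1/2) *\<^sub>R (\<mu>p - \<mu>n))"
  have "norm u = 1" using assms(1) by (simp add: u_def)
  have "0 \<le> K"
    using inner_le_strong_adv_margin[OF \<open>norm u = 1\<close> assms(3), of 0] assms(4,5) by (simp add: K_def u_def)
  have "has_strong_adv w b u \<epsilon> \<delta> x \<longleftrightarrow> (if lin_class w b x then w \<bullet> x + b \<le> K else - K < w \<bullet> x + b)" for x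
    using has_strong_adv_iff[OF \<open>norm u = 1\<close> assms(3,4,5)] by (simp add: K_def u_def)
  then have "{x. lin_class w b x \<and> has_strong_adv w b u \<epsilon> \<delta> x} = {x. w \<bullet> x \<in> {-b<..K-b}}"
    "{x. \<not> lin_class w b x \<and> has_strong_adv w b u \<epsilon> \<delta> x} = {x. w \<bullet> x \<in> {-K-b<..-b}}"
    by (auto simp: lin_class_def)
  then have "p_sadv \<mu>p \<mu>n \<sigma> w b \<epsilon> \<delta>
      = 1/2 * measure (density lborel (normal_density (w \<bullet> \<mu>p) (norm w * \<sigma>))) {-b<..K-b}
      + 1/2 * measure (density lborel (normal_density (w \<bullet> \<mu>n) (norm w * \<sigma>))) {-K-b<..-b}"
    unfolding p_sadv_def Let_def u_def[symmetric]
    by (simp only: measure_iso_gauss_inner[OF assms(2,3)] greaterThanAtMost_borel)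
  then show ?thesis
    using assms(2,3) \<open>0 \<le> K\<close> by (simp add: measure_normal_greaterThanAtMost)
qed

lemma p_sadv_add_p_m:
  fixes \<mu>p \<mu>n w :: "'a::euclidean_space"
  assumes "\<mu>p \<noteq> \<mu>n" "\<sigma> > 0" "w \<noteq> 0" "0 \<le> \<epsilon>" "0 \<le> \<delta>"
  defines "K \<equiv> strong_adv_margin w ((1 / norm ((1/2) *\<^sub>R (\<mu>p - \<mu>n))) *\<^sub>R ((1/2) *\<^sub>R (\<mu>p - \<mu>n))) \<epsilon> \<delta>"
  shows "p_sadv \<mu>p \<mu>n \<sigma> w b \<epsilon> \<delta> + p_m \<mu>p \<mu>n \<sigma> w b
    = 1 - 1/2 * (Phi ((w \<bullet> \<mu>p + b - K) / (norm w * \<sigma>)) + Phi ((- (w \<bullet> \<mu>n) - b - K) / (norm w * \<sigma>)))"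
proof -
  define s where "s = norm w * \<sigma>"
  have "Phi ((K - b - w \<bullet> \<mu>p) / s) = 1 - Phi ((w \<bullet> \<mu>p + b - K) / s)"
    using Phi_minus[of "(w \<bullet> \<mu>p + b - K) / s"] by (simp add: minus_divide_left algebra_simps)
  moreover have "Phi ((- b - w \<bullet> \<mu>n) / s) = 1 - Phi ((w \<bullet> \<mu>n + b) / s)"
    using Phi_minus[of "(w \<bullet> \<mu>n + b) / s"] by (simp add: minus_divide_left algebra_simps)
  moreover have "- K - b - w \<bullet> \<mu>n = - (w \<bullet> \<mu>n) - b - K"
    by linarith
  ultimately show ?thesis
    unfolding p_sadv_eq_Phi[OF assms(1-5), folded K_def] p_m_eq_Phi[OF assms(2,3)] s_def[symmetric]
    by (simp only:) (simp add: field_simps)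
qed

theorem theorem2:
  fixes \<mu>p \<mu>n w :: "'a::euclidean_space" and \<sigma> b \<epsilon> \<delta> :: real
  assumes "\<mu>p \<noteq> \<mu>n" and "\<sigma> > 0" and "w \<noteq> 0" and "\<epsilon> > 0" and "\<delta> \<ge> 0"
  shows "let \<mu> = (1/2) *\<^sub>R (\<mu>p - \<mu>n);
             \<mu>bar = (1/2) *\<^sub>R (\<mu>p + \<mu>n);
             b' = w \<bullet> \<mu>bar + b;
             \<mu>0 = (1 / norm \<mu>) *\<^sub>R \<mu>;
             \<theta> = arccos (\<bar>w \<bullet> \<mu>0\<bar> / norm w);
             \<beta> = min (\<epsilon> * cos \<theta>) \<delta>;
             g = \<beta> * cos \<theta> + sqrt (\<epsilon>\<^sup>2 - \<beta>\<^sup>2) * sin \<theta>;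
             T = (1/2) * (Phi ((w \<bullet> \<mu> + b') / (norm w * \<sigma>) - g / \<sigma>)
                          + Phi ((w \<bullet> \<mu> - b') / (norm w * \<sigma>) - g / \<sigma>))
         in p_sadv \<mu>p \<mu>n \<sigma> w b \<epsilon> \<delta> = 1 - p_m \<mu>p \<mu>n \<sigma> w b - T
          \<and> p_sadv \<mu>p \<mu>n \<sigma> w b \<epsilon> \<delta> + p_m \<mu>p \<mu>n \<sigma> w b = 1 - T"
proof -
  define \<mu> where "\<mu> = (1/2) *\<^sub>R (\<mu>p - \<mu>n)"
  define b' where "b' = w \<bullet> ((1/2) *\<^sub>R (\<mu>p + \<mu>n)) + b"
  define \<mu>0 where "\<mu>0 = (1 / norm \<mu>) *\<^sub>R \<mu>"
  define \<theta> where "\<theta> = arccos (\<bar>w \<bullet> \<mu>0\<bar> / norm w)"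
  define g where "g = min (\<epsilon> * cos \<theta>) \<delta> * cos \<theta> + sqrt (\<epsilon>\<^sup>2 - (min (\<epsilon> * cos \<theta>) \<delta>)\<^sup>2) * sin \<theta>"
  have "norm \<mu>0 = 1" using assms(1) by (simp add: \<mu>0_def \<mu>_def)
  then have "strong_adv_margin w \<mu>0 \<epsilon> \<delta> = norm w * g"
    unfolding g_def \<theta>_def using assms(3) by (rule strong_adv_margin_arccos)
  moreover have "w \<bullet> \<mu> + b' = w \<bullet> \<mu>p + b" "w \<bullet> \<mu> - b' = - (w \<bullet> \<mu>n) - b"
    by (simp_all add: \<mu>_def b'_def inner_diff_right inner_add_right algebra_simps)
  ultimately have "p_sadv \<mu>p \<mu>n \<sigma> w b \<epsilon> \<delta> + p_m \<mu>p \<mu>n \<sigma> w b = 1 - (1/2) *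
      (Phi ((w \<bullet> \<mu> + b') / (norm w * \<sigma>) - g / \<sigma>) + Phi ((w \<bullet> \<mu> - b') / (norm w * \<sigma>) - g / \<sigma>))"
    using p_sadv_add_p_m[OF assms(1-3) less_imp_le[OF assms(4)] assms(5), of b] assms(3)
    by (simp add: \<mu>0_def \<mu>_def diff_divide_distrib)
  then show ?thesis
    unfolding Let_def \<mu>_def[symmetric] b'_def[symmetric] \<mu>0_def[symmetric] \<theta>_def[symmetric] g_def[symmetric]
    by simp
qed

end
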